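(* Let $\mathcal E_i\equiv1\to H_i\xrightarrow{\alpha_i}G_i\xrightarrow{\beta_i}K_i\to1$ ($i=1,2$) be central extensions of multiplicative Lie algebras that are isoclinic via $(\lambda,\mu)$. Then: (1) $G_1$ and $G_2$ are isoclinic via $(\bar\lambda,\mu)$, where $\bar\lambda:G_1/\mathcal Z(G_1)\to G_2/\mathcal Z(G_2)$ is the isomorphism induced by $\lambda$, namely $\bar\lambda(g_1\mathcal Z(G_1))=g_2\mathcal Z(G_2)$ whenever $\beta_2(g_2)=\lambda(\beta_1(g_1))$; (2) $\alpha_1(H_1)=\mathcal Z(G_1)$ if and only if $\alpha_2(H_2)=\mathcal Z(G_2)$.
   Context: A multiplicative Lie algebra is a group $(G,\cdot)$ with a binary operation $\star$ such that for all $x,y,z\in G$: $x\star x=1$; $x\star(yz)=(x\star y)\,{}^y(x\star z)$; $(xy)\star z={}^x(y\star z)(x\star z)$; $((x\star y)\star{}^yz)((y\star z)\star{}^zx)((z\star x)\star{}^xy)=1$; ${}^z(x\star y)={}^zx\star{}^zy$, where ${}^xy=xyx^{-1}$. $Z(G)$ is the group center, $LZ(G)=\{x: x\star y=1\ \forall y\}$, $\mathcal Z(G)=LZ(G)\cap Z(G)$; $[x,y]$ is the group commutator; ${}^M[G,G]=(G\star G)[G,G]$ with $G\star G$ the ideal generated by all $a\star b$. A central extension is a short exact sequence $1\to H\xrightarrow{\alpha}G\xrightarrow{\beta}K\to1$ of multiplicative Lie algebras with $\alpha(H)\subseteq\mathcal Z(G)$. Central extensions $\mathcal E_1,\mathcal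 E_2$ are isoclinic via $(\lambda,\mu)$ if $\lambda:K_1\to K_2$ and $\mu:{}^M[G_1,G_1]\to{}^M[G_2,G_2]$ are multiplicative Lie algebra isomorphisms with $\mu([g,g'])=[h,h']$ and $\mu(g\star g')=h\star h'$ whenever $g,g'\in G_1$, $h,h'\in G_2$ satisfy $\beta_2(h)=\lambda\beta_1(g)$, $\beta_2(h')=\lambda\beta_1(g')$. Two multiplicative Lie algebras $G_1,G_2$ are isoclinic via $(\bar\lambda,\mu)$ if $\bar\lambda:G_1/\mathcal Z(G_1)\to G_2/\mathcal Z(G_2)$ and $\mu:{}^M[G_1,G_1]\to{}^M[G_2,G_2]$ are isomorphisms with $\mu([g,g'])=[h,h']$, $\mu(g\star g')=h\star h'$ whenever $\bar\lambda(g\mathcal Z(G_1))=h\mathcal Z(G_2)$, $\bar\lambda(g'\mathcal Z(G_1))=h'\mathcal Z(G_2)$. *)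

theory Defs
  imports "HOL-Algebra.Algebra"
begin

record 'a mlie = "'a monoid" + star :: "'a \<Rightarrow> 'a \<Rightarrow> 'a"

definition conj :: "('a, 'b) monoid_scheme \<Rightarrow> 'a \<Rightarrow> 'a \<Rightarrow> 'a" where
  "conj G x y = x \<otimes>\<^bsub>G\<^esub> y \<otimes>\<^bsub>G\<^esub> inv\<^bsub>G\<^esub> x"

definition comm :: "('a, 'b) monoid_scheme \<Rightarrow> 'a \<Rightarrow> 'a \<Rightarrow> 'a" where
  "comm G x y = x \<otimes>\<^bsub>G\<^esub> y \<otimes>\<^bsub>G\<^esub> inv\<^bsub>G\<^esub> x \<otimes>\<^bsub>G\<^esub> inv\<^bsub>G\<^esub> y"

definition mla :: "('a, 'b) mlie_scheme \<Rightarrow> bool" where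
  "mla G \<longleftrightarrow> group G \<and>
     (\<forall>x\<in>carrier G. \<forall>y\<in>carrier G. star G x y \<in> carrier G) \<and>
     (\<forall>x\<in>carrier G. star G x x = \<one>\<^bsub>G\<^esub>) \<and>
     (\<forall>x\<in>carrier G. \<forall>y\<in>carrier G. \<forall>z\<in>carrier G.
        star G x (y \<otimes>\<^bsub>G\<^esub> z) = star G x y \<otimes>\<^bsub>G\<^esub> conj G y (star G x z)) \<and>
     (\<forall>x\<in>carrier G. \<forall>y\<in>carrier G. \<forall>z\<in>carrier G.
        star G (x \<otimes>\<^bsub>G\<^esub> y) z = conj G x (star G y z) \<otimes>\<^bsub>G\<^esub> star G x z) \<and>
     (\<forall>x\<in>carrier G. \<forall>y\<in>carrier G. \<forall>z\<in>carrier G.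
        star G (star G x y) (conj G y z) \<otimes>\<^bsub>G\<^esub> star G (star G y z) (conj G z x)
          \<otimes>\<^bsub>G\<^esub> star G (star G z x) (conj G x y) = \<one>\<^bsub>G\<^esub>) \<and>
     (\<forall>x\<in>carrier G. \<forall>y\<in>carrier G. \<forall>z\<in>carrier G.
        conj G z (star G x y) = star G (conj G z x) (conj G z y))"

definition mla_hom :: "('a, 'c) mlie_scheme \<Rightarrow> ('b, 'd) mlie_scheme \<Rightarrow> ('a \<Rightarrow> 'b) \<Rightarrow> bool" where
  "mla_hom G G' f \<longleftrightarrow> f \<in> hom G G' \<and>
     (\<forall>x\<in>carrier G. \<forall>y\<in>carrier G. f (star G x y) = star G' (f x) (f y))"

definition mla_iso :: "('a, 'c) mlie_scheme \<Rightarrow> ('b, 'd) mlie_scheme \<Rightarrow> ('a \<Rightarrow> 'b) \<Rightarrow> bool" where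
  "mla_iso G G' f \<longleftrightarrow> mla_hom G G' f \<and> bij_betw f (carrier G) (carrier G')"

definition grp_center :: "('a, 'b) monoid_scheme \<Rightarrow> 'a set" where
  "grp_center G = {z \<in> carrier G. \<forall>x\<in>carrier G. z \<otimes>\<^bsub>G\<^esub> x = x \<otimes>\<^bsub>G\<^esub> z}"

definition LZ :: "('a, 'b) mlie_scheme \<Rightarrow> 'a set" where
  "LZ G = {x \<in> carrier G. \<forall>y\<in>carrier G. star G x y = \<one>\<^bsub>G\<^esub>}"

definition ZZ :: "('a, 'b) mlie_scheme \<Rightarrow> 'a set" where
  "ZZ G = LZ G \<inter> grp_center G"

definition mla_ideal :: "('a, 'b) mlie_scheme \<Rightarrow> 'a set \<Rightarrow> bool" where
  "mla_ideal G I \<longleftrightarrow> I \<lhd> G \<and>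
     (\<forall>x\<in>carrier G. \<forall>i\<in>I. star G x i \<in> I \<and> star G i x \<in> I)"

definition ideal_gen :: "('a, 'b) mlie_scheme \<Rightarrow> 'a set \<Rightarrow> 'a set" where
  "ideal_gen G S = \<Inter>{I. mla_ideal G I \<and> S \<subseteq> I}"

definition star_ideal :: "('a, 'b) mlie_scheme \<Rightarrow> 'a set" where
  "star_ideal G = ideal_gen G {star G a b | a b. a \<in> carrier G \<and> b \<in> carrier G}"

definition MComm :: "('a, 'b) mlie_scheme \<Rightarrow> 'a set" where
  "MComm G = star_ideal G <#>\<^bsub>G\<^esub> derived G (carrier G)"

definition MCommAlg :: "('a, 'b) mlie_scheme \<Rightarrow> ('a, 'b) mlie_scheme" where
  "MCommAlg G = G\<lparr>carrier := MComm G\<rparr>"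

definition MQuot :: "('a, 'b) mlie_scheme \<Rightarrow> 'a set \<Rightarrow> 'a set mlie" where
  "MQuot G N = \<lparr>carrier = rcosets\<^bsub>G\<^esub> N, monoid.mult = set_mult G, one = N,
     star = (\<lambda>A B. N #>\<^bsub>G\<^esub> star G (SOME a. a \<in> A) (SOME b. b \<in> B))\<rparr>"

definition central_ext ::
  "('a, 'x) mlie_scheme \<Rightarrow> ('b, 'y) mlie_scheme \<Rightarrow> ('c, 'z) mlie_scheme \<Rightarrow>
   ('a \<Rightarrow> 'b) \<Rightarrow> ('b \<Rightarrow> 'c) \<Rightarrow> bool" where
  "central_ext H G K \<alpha> \<beta> \<longleftrightarrow> mla H \<and> mla G \<and> mla K \<and>
     mla_hom H G \<alpha> \<and> mla_hom G K \<beta> \<and>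
     inj_on \<alpha> (carrier H) \<and> \<beta> ` carrier G = carrier K \<and>
     \<alpha> ` carrier H = kernel G K \<beta> \<and> \<alpha> ` carrier H \<subseteq> ZZ G"

definition ext_isoclinic_via ::
  "('b1, 'y1) mlie_scheme \<Rightarrow> ('c1, 'z1) mlie_scheme \<Rightarrow> ('b1 \<Rightarrow> 'c1) \<Rightarrow>
   ('b2, 'y2) mlie_scheme \<Rightarrow> ('c2, 'z2) mlie_scheme \<Rightarrow> ('b2 \<Rightarrow> 'c2) \<Rightarrow>
   ('c1 \<Rightarrow> 'c2) \<Rightarrow> ('b1 \<Rightarrow> 'b2) \<Rightarrow> bool" where
  "ext_isoclinic_via G1 K1 \<beta>1 G2 K2 \<beta>2 lam mu \<longleftrightarrow>
     mla_iso K1 K2 lam \<and> mla_iso (MCommAlg G1) (MCommAlg G2) mu \<and>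
     (\<forall>g\<in>carrier G1. \<forall>g'\<in>carrier G1. \<forall>h\<in>carrier G2. \<forall>h'\<in>carrier G2.
        \<beta>2 h = lam (\<beta>1 g) \<and> \<beta>2 h' = lam (\<beta>1 g') \<longrightarrow>
        mu (comm G1 g g') = comm G2 h h' \<and> mu (star G1 g g') = star G2 h h')"

definition isoclinic_via ::
  "('b1, 'y1) mlie_scheme \<Rightarrow> ('b2, 'y2) mlie_scheme \<Rightarrow>
   ('b1 set \<Rightarrow> 'b2 set) \<Rightarrow> ('b1 \<Rightarrow> 'b2) \<Rightarrow> bool" where
  "isoclinic_via G1 G2 lamb mu \<longleftrightarrow>
     mla_iso (MQuot G1 (ZZ G1)) (MQuot G2 (ZZ G2)) lamb \<and>
     mla_iso (MCommAlg G1) (MCommAlg G2) mu \<and>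
     (\<forall>g\<in>carrier G1. \<forall>g'\<in>carrier G1. \<forall>h\<in>carrier G2. \<forall>h'\<in>carrier G2.
        lamb (ZZ G1 #>\<^bsub>G1\<^esub> g) = ZZ G2 #>\<^bsub>G2\<^esub> h \<and>
        lamb (ZZ G1 #>\<^bsub>G1\<^esub> g') = ZZ G2 #>\<^bsub>G2\<^esub> h' \<longrightarrow>
        mu (comm G1 g g') = comm G2 h h' \<and> mu (star G1 g g') = star G2 h h')"

end

(*
  Call g in G1 and h in G2 corresponding if beta2 h = lam (beta1 g); every element of either
  algebra has a corresponding partner.  An element x lies in ZZ G exactly when [x, y] = 1 and
  star x y = 1 for all y.  Since mu is injective on M[G1, G1] and sends [g, g'] and star g g'
  to [h, h'] and star h h' for corresponding pairs, corresponding elements are simultaneously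
  in ZZ or not.  Applied to g0 g^-1 and h0 h^-1, this says that corresponding elements lie in
  corresponding cosets of ZZ, so the correspondence maps the coset ZZ G1 g onto a single coset
  ZZ G2 h: this is lambda-bar, a bijection respecting products and stars.  Commutators and
  stars only depend on the cosets of ZZ, which gives the compatibility with mu.

  For (2), alpha_i (H_i) = ker beta_i lies inside ZZ G_i, so alpha_i (H_i) = ZZ G_i iff
  ZZ G_i is contained in ker beta_i.  As lam is injective, corresponding elements are
  simultaneously in the kernels, so this condition transfers between the two extensions.
*)
theory Submission
  imports Defs
begin

locale mult_lie_algebra =
  fixes G (structure)
  assumes mla: "mla G"
begin

sublocale group G
  using mla unfolding mla_def by simp

lemma star_closed [simp]: "x \<in> carrier G \<Longrightarrow> y \<in> carrier G \<Longrightarrow> star G x y \<in> carrier G"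
  using mla unfolding mla_def by blast

lemma star_self [simp]: "x \<in> carrier G \<Longrightarrow> star G x x = \<one>"
  using mla unfolding mla_def by blast

lemma star_mult_right:
  "x \<in> carrier G \<Longrightarrow> y \<in> carrier G \<Longrightarrow> z \<in> carrier G \<Longrightarrow>
    star G x (y \<otimes> z) = star G x y \<otimes> conj G y (star G x z)"
  using mla unfolding mla_def by blast

lemma star_mult_left:
  "x \<in> carrier G \<Longrightarrow> y \<in> carrier G \<Longrightarrow> z \<in> carrier G \<Longrightarrow>
    star G (x \<otimes> y) z = conj G x (star G y z) \<otimes> star G x z"
  using mla unfolding mla_def by blast

lemma conj_one [simp]: "x \<in> carrier G \<Longrightarrow> conj G x \<one> = \<one>"
  unfolding conj_def by simp

lemma conj_grp_center: "z \<in> grp_center G \<Longrightarrow> t \<in> carrier G \<Longrightarrow> conj G z t = t"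
  unfolding conj_def grp_center_def by (auto simp: m_assoc)

lemma comm_closed [simp]: "x \<in> carrier G \<Longrightarrow> y \<in> carrier G \<Longrightarrow> comm G x y \<in> carrier G"
  unfolding comm_def by simp

lemma comm_eq_one_iff:
  assumes "x \<in> carrier G" "y \<in> carrier G"
  shows "comm G x y = \<one> \<longleftrightarrow> x \<otimes> y = y \<otimes> x"
  using assms unfolding comm_def by (simp add: inv_solve_right')

lemma star_one_left [simp]:
  assumes "z \<in> carrier G"
  shows "star G \<one> z = \<one>"
proof -
  have "star G \<one> z = star G \<one> z \<otimes> star G \<one> z"
    using star_mult_left[of \<one> \<one> z] assms by (simp add: conj_def)
  then show ?thesis
    using assms by (metis one_closed r_cancel_one' star_closed)
qed

lemma subgroup_LZ: "subgroup (LZ G) G"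
proof (rule subgroupI)
  show "LZ G \<subseteq> carrier G"
    by (auto simp: LZ_def)
  have "\<one> \<in> LZ G"
    by (simp add: LZ_def)
  then show "LZ G \<noteq> {}"
    by blast
next
  fix a assume a: "a \<in> LZ G"
  show "inv a \<in> LZ G"
    unfolding LZ_def
  proof safe
    fix y assume y: "y \<in> carrier G"
    have ac: "a \<in> carrier G" and ay: "star G a y = \<one>"
      using a y by (auto simp: LZ_def)
    from star_mult_left[OF inv_closed[OF ac] ac y]
    show "star G (inv a) y = \<one>"
      using ac y ay by simp
  qed (use a in \<open>auto simp: LZ_def\<close>)
next
  fix a b assume a: "a \<in> LZ G" and b: "b \<in> LZ G"
  have ac: "a \<in> carrier G" and bc: "b \<in> carrier G"
    and a1: "\<And>y. y \<in> carrier G \<Longrightarrow> star G a y = \<one>"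
    and b1: "\<And>y. y \<in> carrier G \<Longrightarrow> star G b y = \<one>"
    using a b by (auto simp: LZ_def)
  have "star G (a \<otimes> b) y = \<one>" if y: "y \<in> carrier G" for y
    using star_mult_left[OF ac bc y] a1[OF y] b1[OF y] ac by simp
  then show "a \<otimes> b \<in> LZ G"
    using a b by (simp add: LZ_def)
qed

lemma subgroup_grp_center: "subgroup (grp_center G) G"
proof (rule subgroupI)
  fix a assume a: "a \<in> grp_center G"
  have ac: "a \<in> carrier G"
    using a by (simp add: grp_center_def)
  have "inv a \<otimes> x = x \<otimes> inv a" if x: "x \<in> carrier G" for x
  proof -
    have "inv a \<otimes> x = inv a \<otimes> (x \<otimes> a) \<otimes> inv a"
      using ac x by (simp add: m_assoc)
    also have "\<dots> = inv a \<otimes> (a \<otimes> x) \<otimes> inv a"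
      using a x by (simp add: grp_center_def)
    also have "\<dots> = x \<otimes> inv a"
      using ac x by (simp add: m_assoc[symmetric])
    finally show ?thesis .
  qed
  then show "inv a \<in> grp_center G"
    using ac by (simp add: grp_center_def)
next
  fix a b assume a: "a \<in> grp_center G" and b: "b \<in> grp_center G"
  have ac: "a \<in> carrier G" and bc: "b \<in> carrier G"
    using a b by (auto simp: grp_center_def)
  have "a \<otimes> b \<otimes> x = x \<otimes> (a \<otimes> b)" if x: "x \<in> carrier G" for x
  proof -
    have ax: "a \<otimes> x = x \<otimes> a" and bx: "b \<otimes> x = x \<otimes> b"
      using a b x by (auto simp: grp_center_def)
    have "a \<otimes> b \<otimes> x = a \<otimes> (x \<otimes> b)"
      using ac bc x bx by (simp add: m_assoc)
    also have "\<dots> = x \<otimes> a \<otimes> b"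
      using ac bc x ax by (simp add: m_assoc[symmetric])
    finally show ?thesis
      using ac bc x by (simp add: m_assoc)
  qed
  then show "a \<otimes> b \<in> grp_center G"
    using ac bc by (simp add: grp_center_def)
next
  show "grp_center G \<subseteq> carrier G"
    by (auto simp: grp_center_def)
  have "\<one> \<in> grp_center G"
    by (simp add: grp_center_def)
  then show "grp_center G \<noteq> {}"
    by blast
qed

lemma subgroup_ZZ: "subgroup (ZZ G) G"
  unfolding ZZ_def using subgroup_LZ subgroup_grp_center by (rule subgroups_Inter_pair)

lemma ZZ_closed: "z \<in> ZZ G \<Longrightarrow> z \<in> carrier G"
  by (rule subgroup.mem_carrier[OF subgroup_ZZ])

lemma normal_ZZ: "ZZ G \<lhd> G"
proof (rule normal_invI[OF subgroup_ZZ])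
  fix x h assume x: "x \<in> carrier G" and h: "h \<in> ZZ G"
  have hc: "h \<in> carrier G" and "x \<otimes> h = h \<otimes> x"
    using x h by (auto simp: ZZ_def grp_center_def)
  then have "x \<otimes> h \<otimes> inv x = h \<otimes> (x \<otimes> inv x)"
    using x by (simp add: m_assoc)
  then have "x \<otimes> h \<otimes> inv x = h"
    using x hc by simp
  then show "x \<otimes> h \<otimes> inv x \<in> ZZ G"
    using h by simp
qed

lemma ZZ_iff:
  "g \<in> ZZ G \<longleftrightarrow> g \<in> carrier G \<and> (\<forall>y\<in>carrier G. comm G g y = \<one> \<and> star G g y = \<one>)"
  by (auto simp: ZZ_def LZ_def grp_center_def comm_eq_one_iff)

lemma star_ZZ_right:
  assumes z: "z \<in> ZZ G" and y: "y \<in> carrier G"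
  shows "star G y z = \<one>"
proof -
  have zc: "z \<in> carrier G" and zl: "\<And>w. w \<in> carrier G \<Longrightarrow> star G z w = \<one>"
    and zcen: "z \<in> grp_center G"
    using z unfolding ZZ_def LZ_def by auto
  have "\<one> = star G (z \<otimes> y) (z \<otimes> y)"
    using zc y by simp
  also have "\<dots> = conj G z (star G y (z \<otimes> y)) \<otimes> star G z (z \<otimes> y)"
    using zc y by (intro star_mult_left) simp_all
  also have "\<dots> = star G y (z \<otimes> y)"
    using zc y zl conj_grp_center[OF zcen] by simp
  also have "\<dots> = star G y z"
    using star_mult_right[of y z y] zc y by simp
  finally show ?thesis
    by (rule sym)
qed

lemma star_mult_ZZ:
  assumes z: "z \<in> ZZ G" and y: "y \<in> carrier G" and w: "w \<in> carrier G"
  shows "star G (z \<otimes> y) w = star G y w" and "star G y (z \<otimes> w) = star G y w"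
proof -
  have zc: "z \<in> carrier G" and zl: "\<And>w. w \<in> carrier G \<Longrightarrow> star G z w = \<one>"
    and zcen: "z \<in> grp_center G"
    using z unfolding ZZ_def LZ_def by auto
  show "star G (z \<otimes> y) w = star G y w"
    using star_mult_left[of z y w] zc y w zl conj_grp_center[OF zcen] by simp
  show "star G y (z \<otimes> w) = star G y w"
    using star_mult_right[of y z w] zc y w star_ZZ_right[OF z y] conj_grp_center[OF zcen] by simp
qed

lemma comm_mult_ZZ:
  assumes z: "z \<in> ZZ G" and y: "y \<in> carrier G" and w: "w \<in> carrier G"
  shows "comm G (z \<otimes> y) w = comm G y w" and "comm G y (z \<otimes> w) = comm G y w"
proof -
  have zc: "z \<in> carrier G" and zcen: "\<And>x. x \<in> carrier G \<Longrightarrow> z \<otimes> x = x \<otimes> z"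
    using z unfolding ZZ_def grp_center_def by auto
  have "comm G (z \<otimes> y) w = z \<otimes> (y \<otimes> w \<otimes> inv y) \<otimes> inv z \<otimes> inv w"
    unfolding comm_def using zc y w by (simp add: inv_mult_group m_assoc)
  also have "\<dots> = (y \<otimes> w \<otimes> inv y) \<otimes> z \<otimes> inv z \<otimes> inv w"
    using zcen[of "y \<otimes> w \<otimes> inv y"] y w by simp
  also have "\<dots> = comm G y w"
    unfolding comm_def using zc y w by (simp add: m_assoc)
  finally show "comm G (z \<otimes> y) w = comm G y w" .
  have "comm G y (z \<otimes> w) = (y \<otimes> z) \<otimes> (w \<otimes> inv y \<otimes> inv w) \<otimes> inv z"
    unfolding comm_def using zc y w by (simp add: inv_mult_group m_assoc)
  also have "\<dots> = (z \<otimes> y) \<otimes> (w \<otimes> inv y \<otimes> inv w) \<otimes> inv z"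
    using zcen[OF y] by simp
  also have "\<dots> = z \<otimes> (y \<otimes> w \<otimes> inv y \<otimes> inv w) \<otimes> inv z"
    using zc y w by (simp add: m_assoc)
  also have "\<dots> = (y \<otimes> w \<otimes> inv y \<otimes> inv w) \<otimes> z \<otimes> inv z"
    using zcen[of "y \<otimes> w \<otimes> inv y \<otimes> inv w"] y w by simp
  also have "\<dots> = comm G y w"
    unfolding comm_def using zc y w by (simp add: m_assoc)
  finally show "comm G y (z \<otimes> w) = comm G y w" .
qed

lemma star_comm_rcos_ZZ:
  assumes g: "g \<in> carrier G" and g': "g' \<in> carrier G"
    and a: "a \<in> ZZ G #> g" and b: "b \<in> ZZ G #> g'"
  shows "star G a b = star G g g'" and "comm G a b = comm G g g'"
proof -
  obtain z z' where z: "z \<in> ZZ G" "a = z \<otimes> g" and z': "z' \<in> ZZ G" "b = z' \<otimes> g'"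
    using a b unfolding r_coset_def by blast
  show "star G a b = star G g g'"
    using z z' g g' star_mult_ZZ ZZ_closed by simp
  show "comm G a b = comm G g g'"
    using z z' g g' comm_mult_ZZ ZZ_closed by simp
qed

lemma star_MQuot_ZZ:
  assumes g: "g \<in> carrier G" and g': "g' \<in> carrier G"
  shows "star (MQuot G (ZZ G)) (ZZ G #> g) (ZZ G #> g') = ZZ G #> star G g g'"
proof -
  have "(SOME a. a \<in> ZZ G #> g) \<in> ZZ G #> g" "(SOME b. b \<in> ZZ G #> g') \<in> ZZ G #> g'"
    using rcos_self[OF g subgroup_ZZ] rcos_self[OF g' subgroup_ZZ] by (auto intro: someI)
  then show ?thesis
    unfolding MQuot_def using star_comm_rcos_ZZ(1)[OF g g'] by simp
qed

lemma one_in_star_ideal: "\<one> \<in> star_ideal G"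
  unfolding star_ideal_def ideal_gen_def mla_ideal_def
  by (auto intro: subgroup.one_closed normal_imp_subgroup)

lemma star_in_star_ideal: "x \<in> carrier G \<Longrightarrow> y \<in> carrier G \<Longrightarrow> star G x y \<in> star_ideal G"
  unfolding star_ideal_def ideal_gen_def by blast

lemma comm_in_derived: "x \<in> carrier G \<Longrightarrow> y \<in> carrier G \<Longrightarrow> comm G x y \<in> derived G (carrier G)"
  unfolding derived_def comm_def by (rule generate.incl) blast

lemma one_in_derived: "\<one> \<in> derived G (carrier G)"
  unfolding derived_def by (rule generate.one)

lemma mult_in_MComm:
  "a \<in> star_ideal G \<Longrightarrow> b \<in> derived G (carrier G) \<Longrightarrow> a \<otimes> b \<in> MComm G"
  unfolding MComm_def set_mult_def by blast

lemma comm_in_MComm: "x \<in> carrier G \<Longrightarrow> y \<in> carrier G \<Longrightarrow> comm G x y \<in> MComm G"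
  using mult_in_MComm[OF one_in_star_ideal comm_in_derived] by simp

lemma star_in_MComm: "x \<in> carrier G \<Longrightarrow> y \<in> carrier G \<Longrightarrow> star G x y \<in> MComm G"
  using mult_in_MComm[OF star_in_star_ideal one_in_derived] by simp

lemma one_in_MComm: "\<one> \<in> MComm G"
  using comm_in_MComm[of \<one> \<one>] by (simp add: comm_def)

end

lemma carrier_MQuot [simp]: "carrier (MQuot G N) = rcosets\<^bsub>G\<^esub> N"
  by (simp add: MQuot_def)

lemma mult_MQuot [simp]: "A \<otimes>\<^bsub>MQuot G N\<^esub> B = A <#>\<^bsub>G\<^esub> B"
  by (simp add: MQuot_def)

locale ext_isoclinism =
  G1: mult_lie_algebra G1 + G2: mult_lie_algebra G2 + K1: group K1 + K2: group K2
  for G1 :: "('g1, 'x1) mlie_scheme" and G2 :: "('g2, 'x2) mlie_scheme"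
    and K1 :: "('k1, 'y1) mlie_scheme" and K2 :: "('k2, 'y2) mlie_scheme" +
  fixes \<beta>1 :: "'g1 \<Rightarrow> 'k1" and \<beta>2 :: "'g2 \<Rightarrow> 'k2"
    and lam :: "'k1 \<Rightarrow> 'k2" and mu :: "'g1 \<Rightarrow> 'g2"
  assumes \<beta>1_hom: "mla_hom G1 K1 \<beta>1" and \<beta>1_surj: "\<beta>1 ` carrier G1 = carrier K1"
    and \<beta>2_hom: "mla_hom G2 K2 \<beta>2" and \<beta>2_surj: "\<beta>2 ` carrier G2 = carrier K2"
    and isoclinic: "ext_isoclinic_via G1 K1 \<beta>1 G2 K2 \<beta>2 lam mu"
begin

sublocale \<beta>1: group_hom G1 K1 \<beta>1
  using \<beta>1_hom by unfold_locales (simp add: mla_hom_def)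

sublocale \<beta>2: group_hom G2 K2 \<beta>2
  using \<beta>2_hom by unfold_locales (simp add: mla_hom_def)

sublocale lam: group_hom K1 K2 lam
  using isoclinic by unfold_locales (simp add: ext_isoclinic_via_def mla_iso_def mla_hom_def)

abbreviation corresp :: "'g1 \<Rightarrow> 'g2 \<Rightarrow> bool" where
  "corresp g h \<equiv> \<beta>2 h = lam (\<beta>1 g)"

lemma inj_on_lam: "inj_on lam (carrier K1)"
  using isoclinic by (simp add: ext_isoclinic_via_def mla_iso_def bij_betw_def)

lemma lam_image: "lam ` carrier K1 = carrier K2"
  using isoclinic by (simp add: ext_isoclinic_via_def mla_iso_def bij_betw_def)

lemma corresp_exists_right: "g \<in> carrier G1 \<Longrightarrow> \<exists>h\<in>carrier G2. corresp g h"
  using \<beta>2_surj by (metis image_iff \<beta>1.hom_closed lam.hom_closed)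

lemma corresp_exists_left: "h \<in> carrier G2 \<Longrightarrow> \<exists>g\<in>carrier G1. corresp g h"
  using \<beta>1_surj lam_image by (metis image_iff \<beta>2.hom_closed)

lemma corresp_one: "corresp \<one>\<^bsub>G1\<^esub> \<one>\<^bsub>G2\<^esub>"
  by simp

lemma corresp_mult:
  "g \<in> carrier G1 \<Longrightarrow> g' \<in> carrier G1 \<Longrightarrow> h \<in> carrier G2 \<Longrightarrow> h' \<in> carrier G2 \<Longrightarrow>
    corresp g h \<Longrightarrow> corresp g' h' \<Longrightarrow> corresp (g \<otimes>\<^bsub>G1\<^esub> g') (h \<otimes>\<^bsub>G2\<^esub> h')"
  by simp

lemma corresp_inv:
  "g \<in> carrier G1 \<Longrightarrow> h \<in> carrier G2 \<Longrightarrow> corresp g h \<Longrightarrow> corresp (inv\<^bsub>G1\<^esub> g) (inv\<^bsub>G2\<^esub> h)"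
  by (simp add: \<beta>1.hom_inv \<beta>2.hom_inv lam.hom_inv)

lemma corresp_star:
  assumes "g \<in> carrier G1" "g' \<in> carrier G1" "h \<in> carrier G2" "h' \<in> carrier G2"
    and "corresp g h" "corresp g' h'"
  shows "corresp (star G1 g g') (star G2 h h')"
  using assms \<beta>1_hom \<beta>2_hom isoclinic
  by (simp add: mla_hom_def ext_isoclinic_via_def mla_iso_def)

lemma corresp_comm_star:
  assumes "g \<in> carrier G1" "g' \<in> carrier G1" "h \<in> carrier G2" "h' \<in> carrier G2"
    and "corresp g h" "corresp g' h'"
  shows "mu (comm G1 g g') = comm G2 h h'" and "mu (star G1 g g') = star G2 h h'"
  using assms isoclinic unfolding ext_isoclinic_via_def by blast+

lemma mu_one: "mu \<one>\<^bsub>G1\<^esub> = \<one>\<^bsub>G2\<^esub>"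
  using corresp_comm_star(1)[OF _ _ _ _ corresp_one corresp_one] by (simp add: comm_def)

lemma inj_on_mu: "inj_on mu (MComm G1)"
  using isoclinic by (simp add: ext_isoclinic_via_def mla_iso_def bij_betw_def MCommAlg_def)

lemma mu_eq_one_iff: "x \<in> MComm G1 \<Longrightarrow> mu x = \<one>\<^bsub>G2\<^esub> \<longleftrightarrow> x = \<one>\<^bsub>G1\<^esub>"
  using inj_on_eq_iff[OF inj_on_mu _ G1.one_in_MComm] mu_one by simp

lemma corresp_ZZ_iff:
  assumes g: "g \<in> carrier G1" and h: "h \<in> carrier G2" and gh: "corresp g h"
  shows "g \<in> ZZ G1 \<longleftrightarrow> h \<in> ZZ G2"
proof -
  have "g \<in> ZZ G1 \<longleftrightarrow>
      (\<forall>g'\<in>carrier G1. mu (comm G1 g g') = \<one>\<^bsub>G2\<^esub> \<and> mu (star G1 g g') = \<one>\<^bsub>G2\<^esub>)"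
    using g by (simp add: G1.ZZ_iff mu_eq_one_iff G1.comm_in_MComm G1.star_in_MComm)
  also have "\<dots> \<longleftrightarrow> (\<forall>h'\<in>carrier G2. comm G2 h h' = \<one>\<^bsub>G2\<^esub> \<and> star G2 h h' = \<one>\<^bsub>G2\<^esub>)"
  proof (intro iffI ballI)
    fix h' assume "\<forall>g'\<in>carrier G1. mu (comm G1 g g') = \<one>\<^bsub>G2\<^esub> \<and> mu (star G1 g g') = \<one>\<^bsub>G2\<^esub>"
      and h': "h' \<in> carrier G2"
    then show "comm G2 h h' = \<one>\<^bsub>G2\<^esub> \<and> star G2 h h' = \<one>\<^bsub>G2\<^esub>"
      using corresp_exists_left[OF h'] corresp_comm_star[OF g _ h h' gh] by metis
  next
    fix g' assume "\<forall>h'\<in>carrier G2. comm G2 h h' = \<one>\<^bsub>G2\<^esub> \<and> star G2 h h' = \<one>\<^bsub>G2\<^esub>"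
      and g': "g' \<in> carrier G1"
    then show "mu (comm G1 g g') = \<one>\<^bsub>G2\<^esub> \<and> mu (star G1 g g') = \<one>\<^bsub>G2\<^esub>"
      using corresp_exists_right[OF g'] corresp_comm_star[OF g g' h _ gh] by metis
  qed
  also have "\<dots> \<longleftrightarrow> h \<in> ZZ G2"
    using h by (simp add: G2.ZZ_iff)
  finally show ?thesis .
qed

lemma corresp_rcos_iff:
  assumes g: "g \<in> carrier G1" and g0: "g0 \<in> carrier G1"
    and h: "h \<in> carrier G2" and h0: "h0 \<in> carrier G2"
    and gh: "corresp g h" and gh0: "corresp g0 h0"
  shows "g0 \<in> ZZ G1 #>\<^bsub>G1\<^esub> g \<longleftrightarrow> h0 \<in> ZZ G2 #>\<^bsub>G2\<^esub> h"
proof -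
  have "g0 \<in> ZZ G1 #>\<^bsub>G1\<^esub> g \<longleftrightarrow> g0 \<otimes>\<^bsub>G1\<^esub> inv\<^bsub>G1\<^esub> g \<in> ZZ G1"
    using subgroup.rcos_module[OF G1.subgroup_ZZ G1.is_group g g0] .
  also have "\<dots> \<longleftrightarrow> h0 \<otimes>\<^bsub>G2\<^esub> inv\<^bsub>G2\<^esub> h \<in> ZZ G2"
    using g g0 h h0 by (intro corresp_ZZ_iff corresp_mult corresp_inv gh gh0) simp_all
  also have "\<dots> \<longleftrightarrow> h0 \<in> ZZ G2 #>\<^bsub>G2\<^esub> h"
    using subgroup.rcos_module[OF G2.subgroup_ZZ G2.is_group h h0] by (rule sym)
  finally show ?thesis .
qed

definition induced_map :: "'g1 set \<Rightarrow> 'g2 set" where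
  "induced_map A = {h \<in> carrier G2. \<exists>g\<in>A. corresp g h}"

lemma induced_map_rcos:
  assumes g: "g \<in> carrier G1" and h: "h \<in> carrier G2" and gh: "corresp g h"
  shows "induced_map (ZZ G1 #>\<^bsub>G1\<^esub> g) = ZZ G2 #>\<^bsub>G2\<^esub> h"
proof (intro equalityI subsetI)
  fix x assume "x \<in> induced_map (ZZ G1 #>\<^bsub>G1\<^esub> g)"
  then obtain g0 where x: "x \<in> carrier G2" and g0: "g0 \<in> ZZ G1 #>\<^bsub>G1\<^esub> g" and "corresp g0 x"
    unfolding induced_map_def by blast
  moreover have "g0 \<in> carrier G1"
    using subgroup.elemrcos_carrier[OF G1.subgroup_ZZ G1.is_group g g0] .
  ultimately show "x \<in> ZZ G2 #>\<^bsub>G2\<^esub> h"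
    using corresp_rcos_iff[OF g _ h x gh] by blast
next
  fix x assume xr: "x \<in> ZZ G2 #>\<^bsub>G2\<^esub> h"
  have x: "x \<in> carrier G2"
    using subgroup.elemrcos_carrier[OF G2.subgroup_ZZ G2.is_group h xr] .
  obtain g0 where "g0 \<in> carrier G1" "corresp g0 x"
    using corresp_exists_left[OF x] by blast
  then show "x \<in> induced_map (ZZ G1 #>\<^bsub>G1\<^esub> g)"
    using corresp_rcos_iff[OF g _ h x gh] xr x unfolding induced_map_def by blast
qed

lemma rcosets_ZZ_correspE:
  assumes "A \<in> rcosets\<^bsub>G1\<^esub> ZZ G1"
  obtains g h where "g \<in> carrier G1" "h \<in> carrier G2" "corresp g h"
    and "A = ZZ G1 #>\<^bsub>G1\<^esub> g" "induced_map A = ZZ G2 #>\<^bsub>G2\<^esub> h"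
proof -
  obtain g where g: "g \<in> carrier G1" "A = ZZ G1 #>\<^bsub>G1\<^esub> g"
    using assms unfolding RCOSETS_def by blast
  moreover obtain h where "h \<in> carrier G2" "corresp g h"
    using corresp_exists_right[OF g(1)] by blast
  ultimately show thesis
    using that induced_map_rcos by blast
qed

lemma induced_map_hom: "induced_map \<in> hom (MQuot G1 (ZZ G1)) (MQuot G2 (ZZ G2))"
proof (rule homI)
  fix A assume "A \<in> carrier (MQuot G1 (ZZ G1))"
  then obtain h where "h \<in> carrier G2" "induced_map A = ZZ G2 #>\<^bsub>G2\<^esub> h"
    by (auto elim: rcosets_ZZ_correspE)
  then show "induced_map A \<in> carrier (MQuot G2 (ZZ G2))"
    by (simp add: G2.rcosetsI G2.ZZ_closed subsetI)
next
  fix A B assume "A \<in> carrier (MQuot G1 (ZZ G1))" "B \<in> carrier (MQuot G1 (ZZ G1))"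
  then obtain g h g' h' where
    g: "g \<in> carrier G1" "h \<in> carrier G2" "corresp g h"
      "A = ZZ G1 #>\<^bsub>G1\<^esub> g" "induced_map A = ZZ G2 #>\<^bsub>G2\<^esub> h"
    and g': "g' \<in> carrier G1" "h' \<in> carrier G2" "corresp g' h'"
      "B = ZZ G1 #>\<^bsub>G1\<^esub> g'" "induced_map B = ZZ G2 #>\<^bsub>G2\<^esub> h'"
    by (auto elim!: rcosets_ZZ_correspE)
  have "induced_map (A <#>\<^bsub>G1\<^esub> B) = induced_map (ZZ G1 #>\<^bsub>G1\<^esub> (g \<otimes>\<^bsub>G1\<^esub> g'))"
    using normal.rcos_sum[OF G1.normal_ZZ g(1) g'(1)] g g' by simp
  also have "\<dots> = ZZ G2 #>\<^bsub>G2\<^esub> (h \<otimes>\<^bsub>G2\<^esub> h')"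
    using g g' by (intro induced_map_rcos corresp_mult) simp_all
  also have "\<dots> = induced_map A <#>\<^bsub>G2\<^esub> induced_map B"
    using normal.rcos_sum[OF G2.normal_ZZ g(2) g'(2)] g g' by simp
  finally show "induced_map (A \<otimes>\<^bsub>MQuot G1 (ZZ G1)\<^esub> B)
      = induced_map A \<otimes>\<^bsub>MQuot G2 (ZZ G2)\<^esub> induced_map B"
    by simp
qed

lemma induced_map_star:
  assumes "A \<in> carrier (MQuot G1 (ZZ G1))" "B \<in> carrier (MQuot G1 (ZZ G1))"
  shows "induced_map (star (MQuot G1 (ZZ G1)) A B)
    = star (MQuot G2 (ZZ G2)) (induced_map A) (induced_map B)"
proof -
  obtain g h g' h' where
    g: "g \<in> carrier G1" "h \<in> carrier G2" "corresp g h"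
      "A = ZZ G1 #>\<^bsub>G1\<^esub> g" "induced_map A = ZZ G2 #>\<^bsub>G2\<^esub> h"
    and g': "g' \<in> carrier G1" "h' \<in> carrier G2" "corresp g' h'"
      "B = ZZ G1 #>\<^bsub>G1\<^esub> g'" "induced_map B = ZZ G2 #>\<^bsub>G2\<^esub> h'"
    using assms by (auto elim!: rcosets_ZZ_correspE)
  have "induced_map (star (MQuot G1 (ZZ G1)) A B) = induced_map (ZZ G1 #>\<^bsub>G1\<^esub> star G1 g g')"
    using G1.star_MQuot_ZZ g g' by simp
  also have "\<dots> = ZZ G2 #>\<^bsub>G2\<^esub> star G2 h h'"
    using g g' by (intro induced_map_rcos corresp_star) simp_all
  also have "\<dots> = star (MQuot G2 (ZZ G2)) (induced_map A) (induced_map B)"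
    using G2.star_MQuot_ZZ g g' by simp
  finally show ?thesis .
qed

lemma inj_on_induced_map: "inj_on induced_map (carrier (MQuot G1 (ZZ G1)))"
proof (rule inj_onI)
  fix A B assume "A \<in> carrier (MQuot G1 (ZZ G1))" "B \<in> carrier (MQuot G1 (ZZ G1))"
    and eq: "induced_map A = induced_map B"
  then obtain g h g' h' where
    g: "g \<in> carrier G1" "h \<in> carrier G2" "corresp g h"
      "A = ZZ G1 #>\<^bsub>G1\<^esub> g" "induced_map A = ZZ G2 #>\<^bsub>G2\<^esub> h"
    and g': "g' \<in> carrier G1" "h' \<in> carrier G2" "corresp g' h'"
      "B = ZZ G1 #>\<^bsub>G1\<^esub> g'" "induced_map B = ZZ G2 #>\<^bsub>G2\<^esub> h'"
    by (auto elim!: rcosets_ZZ_correspE)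
  have "h \<in> ZZ G2 #>\<^bsub>G2\<^esub> h'"
    using eq g g' G2.rcos_self[OF g(2) G2.subgroup_ZZ] by simp
  then have "g \<in> ZZ G1 #>\<^bsub>G1\<^esub> g'"
    using corresp_rcos_iff[OF g'(1) g(1) g'(2) g(2) g'(3) g(3)] by simp
  then show "A = B"
    using G1.repr_independence[OF _ g'(1) G1.subgroup_ZZ] g g' by simp
qed

lemma induced_map_image: "induced_map ` carrier (MQuot G1 (ZZ G1)) = carrier (MQuot G2 (ZZ G2))"
proof
  show "induced_map ` carrier (MQuot G1 (ZZ G1)) \<subseteq> carrier (MQuot G2 (ZZ G2))"
    using induced_map_hom by (auto simp: hom_def)
next
  show "carrier (MQuot G2 (ZZ G2)) \<subseteq> induced_map ` carrier (MQuot G1 (ZZ G1))"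
  proof
    fix B assume "B \<in> carrier (MQuot G2 (ZZ G2))"
    then obtain h where h: "h \<in> carrier G2" "B = ZZ G2 #>\<^bsub>G2\<^esub> h"
      by (auto simp: RCOSETS_def)
    obtain g where "g \<in> carrier G1" "corresp g h"
      using corresp_exists_left[OF h(1)] by blast
    then show "B \<in> induced_map ` carrier (MQuot G1 (ZZ G1))"
      using induced_map_rcos h G1.rcosetsI G1.ZZ_closed by (metis carrier_MQuot image_eqI subsetI)
  qed
qed

lemma mla_iso_induced_map: "mla_iso (MQuot G1 (ZZ G1)) (MQuot G2 (ZZ G2)) induced_map"
  unfolding mla_iso_def mla_hom_def bij_betw_def
  using induced_map_hom induced_map_star inj_on_induced_map induced_map_image by blast

lemma isoclinic_via_induced_map: "isoclinic_via G1 G2 induced_map mu"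
proof -
  have "mu (comm G1 g g') = comm G2 h h' \<and> mu (star G1 g g') = star G2 h h'"
    if g: "g \<in> carrier G1" and g': "g' \<in> carrier G1"
      and "h \<in> carrier G2" and "h' \<in> carrier G2"
      and "induced_map (ZZ G1 #>\<^bsub>G1\<^esub> g) = ZZ G2 #>\<^bsub>G2\<^esub> h"
      and "induced_map (ZZ G1 #>\<^bsub>G1\<^esub> g') = ZZ G2 #>\<^bsub>G2\<^esub> h'"
    for g g' h h'
  proof -
    have hh: "h \<in> induced_map (ZZ G1 #>\<^bsub>G1\<^esub> g)" "h' \<in> induced_map (ZZ G1 #>\<^bsub>G1\<^esub> g')"
      using that G2.rcos_self[OF _ G2.subgroup_ZZ] by auto
    obtain h0 h0' where h0: "h0 \<in> carrier G2" "corresp g h0" and h0': "h0' \<in> carrier G2" "corresp g' h0'"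
      using corresp_exists_right[OF g] corresp_exists_right[OF g'] by blast
    have "h \<in> ZZ G2 #>\<^bsub>G2\<^esub> h0" "h' \<in> ZZ G2 #>\<^bsub>G2\<^esub> h0'"
      using hh induced_map_rcos[OF g h0] induced_map_rcos[OF g' h0'] by simp_all
    then have "comm G2 h h' = comm G2 h0 h0' \<and> star G2 h h' = star G2 h0 h0'"
      using G2.star_comm_rcos_ZZ[OF h0(1) h0'(1)] by simp
    then show ?thesis
      using corresp_comm_star[OF g g' h0(1) h0'(1) h0(2) h0'(2)] by simp
  qed
  moreover have "mla_iso (MCommAlg G1) (MCommAlg G2) mu"
    using isoclinic by (simp add: ext_isoclinic_via_def)
  ultimately show ?thesis
    unfolding isoclinic_via_def using mla_iso_induced_map by blast
qed

lemma corresp_kernel_iff: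
  assumes "g \<in> carrier G1" "h \<in> carrier G2" "corresp g h"
  shows "g \<in> kernel G1 K1 \<beta>1 \<longleftrightarrow> h \<in> kernel G2 K2 \<beta>2"
  using assms inj_on_eq_iff[OF inj_on_lam, of "\<beta>1 g" "\<one>\<^bsub>K1\<^esub>"] by (simp add: kernel_def)

lemma ZZ_subset_kernel_iff: "ZZ G1 \<subseteq> kernel G1 K1 \<beta>1 \<longleftrightarrow> ZZ G2 \<subseteq> kernel G2 K2 \<beta>2"
proof
  assume ZZ1: "ZZ G1 \<subseteq> kernel G1 K1 \<beta>1"
  show "ZZ G2 \<subseteq> kernel G2 K2 \<beta>2"
  proof
    fix h assume hZ: "h \<in> ZZ G2"
    then have h: "h \<in> carrier G2"
      by (rule G2.ZZ_closed)
    then obtain g where "g \<in> carrier G1" "corresp g h"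
      using corresp_exists_left by blast
    then show "h \<in> kernel G2 K2 \<beta>2"
      using ZZ1 hZ h corresp_ZZ_iff corresp_kernel_iff by blast
  qed
next
  assume ZZ2: "ZZ G2 \<subseteq> kernel G2 K2 \<beta>2"
  show "ZZ G1 \<subseteq> kernel G1 K1 \<beta>1"
  proof
    fix g assume gZ: "g \<in> ZZ G1"
    then have g: "g \<in> carrier G1"
      by (rule G1.ZZ_closed)
    then obtain h where "h \<in> carrier G2" "corresp g h"
      using corresp_exists_right by blast
    then show "g \<in> kernel G1 K1 \<beta>1"
      using ZZ2 gZ g corresp_ZZ_iff corresp_kernel_iff by blast
  qed
qed

end

lemma central_ext_image_eq_ZZ_iff:
  assumes "central_ext H G K \<alpha> \<beta>"
  shows "\<alpha> ` carrier H = ZZ G \<longleftrightarrow> ZZ G \<subseteq> kernel G K \<beta>"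
proof -
  have image: "\<alpha> ` carrier H = kernel G K \<beta>" and "\<alpha> ` carrier H \<subseteq> ZZ G"
    using assms unfolding central_ext_def by blast+
  then show ?thesis
    unfolding image set_eq_subset by blast
qed

lemma ext_isoclinism_if_central_ext:
  assumes "central_ext H1 G1 K1 \<alpha>1 \<beta>1" and "central_ext H2 G2 K2 \<alpha>2 \<beta>2"
    and "ext_isoclinic_via G1 K1 \<beta>1 G2 K2 \<beta>2 lam mu"
  shows "ext_isoclinism G1 G2 K1 K2 \<beta>1 \<beta>2 lam mu"
proof -
  have "mla G1" "mla K1" "mla_hom G1 K1 \<beta>1" "\<beta>1 ` carrier G1 = carrier K1"
    and "mla G2" "mla K2" "mla_hom G2 K2 \<beta>2" "\<beta>2 ` carrier G2 = carrier K2"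
    using assms(1,2) by (simp_all add: central_ext_def)
  moreover have "group K1" "group K2"
    using \<open>mla K1\<close> \<open>mla K2\<close> by (auto simp only: mla_def)
  ultimately show ?thesis
    using assms(3) unfolding ext_isoclinism_def ext_isoclinism_axioms_def mult_lie_algebra_def
    by blast
qed

theorem proposition4p3:
  fixes H1 :: "'a1 mlie" and G1 :: "'b1 mlie" and K1 :: "'c1 mlie"
    and H2 :: "'a2 mlie" and G2 :: "'b2 mlie" and K2 :: "'c2 mlie"
    and \<alpha>1 :: "'a1 \<Rightarrow> 'b1" and \<beta>1 :: "'b1 \<Rightarrow> 'c1"
    and \<alpha>2 :: "'a2 \<Rightarrow> 'b2" and \<beta>2 :: "'b2 \<Rightarrow> 'c2"
    and lam :: "'c1 \<Rightarrow> 'c2" and mu :: "'b1 \<Rightarrow> 'b2"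
  assumes "central_ext H1 G1 K1 \<alpha>1 \<beta>1"
    and "central_ext H2 G2 K2 \<alpha>2 \<beta>2"
    and "ext_isoclinic_via G1 K1 \<beta>1 G2 K2 \<beta>2 lam mu"
  shows "(\<exists>lamb. (\<forall>g1\<in>carrier G1. \<forall>g2\<in>carrier G2.
              \<beta>2 g2 = lam (\<beta>1 g1) \<longrightarrow> lamb (ZZ G1 #>\<^bsub>G1\<^esub> g1) = ZZ G2 #>\<^bsub>G2\<^esub> g2)
            \<and> isoclinic_via G1 G2 lamb mu)
       \<and> (\<alpha>1 ` carrier H1 = ZZ G1 \<longleftrightarrow> \<alpha>2 ` carrier H2 = ZZ G2)"
proof -
  interpret ext_isoclinism G1 G2 K1 K2 \<beta>1 \<beta>2 lam mu
    using assms by (rule ext_isoclinism_if_central_ext)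
  have "\<forall>g1\<in>carrier G1. \<forall>g2\<in>carrier G2.
      \<beta>2 g2 = lam (\<beta>1 g1) \<longrightarrow> induced_map (ZZ G1 #>\<^bsub>G1\<^esub> g1) = ZZ G2 #>\<^bsub>G2\<^esub> g2"
    using induced_map_rcos by blast
  with isoclinic_via_induced_map
  have "\<exists>lamb. (\<forall>g1\<in>carrier G1. \<forall>g2\<in>carrier G2.
      \<beta>2 g2 = lam (\<beta>1 g1) \<longrightarrow> lamb (ZZ G1 #>\<^bsub>G1\<^esub> g1) = ZZ G2 #>\<^bsub>G2\<^esub> g2)
    \<and> isoclinic_via G1 G2 lamb mu"
    by blast
  moreover have "\<alpha>1 ` carrier H1 = ZZ G1 \<longleftrightarrow> \<alpha>2 ` carrier H2 = ZZ G2"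
    using ZZ_subset_kernel_iff central_ext_image_eq_ZZ_iff[OF assms(1)]
      central_ext_image_eq_ZZ_iff[OF assms(2)] by simp
  ultimately show ?thesis ..
qed

end
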